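(* Let $n,k,l$ be nonnegative integers with $k+l\le n$, and $\alpha,\beta>-1$. The constrained dual Bernstein polynomials have the B\'ezier–Bernstein representation \[ D^{(n,k,l)}_i(x;\alpha,\beta)=\sum_{j=k}^{n-l}C_{ij}(n,k,l,\alpha,\beta)\,B^n_j(x)\qquad(k\le i\le n-l), \] where \[ C_{ij}(n,k,l,\alpha,\beta):=U_i\,U_j\,c_{i-k,\,j-k}(n-k-l,\ \alpha+2l,\ \beta+2k),\qquad U_i:=\binom{n-k-l}{i-k}\binom{n}{i}^{-1}, \] and $c_{pq}(N,a,b)$ denotes the B\'ezier coefficients of the unconstrained dual Bernstein polynomials, $D^N_p(x;a,b)=\sum_{q=0}^N c_{pq}(N,a,b)B^N_q(x)$ (explicitly, $c_{pq}(N,a,b)=\frac{1}{B(a+1,b+1)}\sum_{m=0}^N\frac{(2m/(a+b+1)+1)(b+1)_m(a+b+1)_m}{m!\,(a+1)_m}Q_m(p;b,a,N)Q_m(q;b,a,N)$).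
   Context: For $a,b>-1$ define the inner product $\langle f,g\rangle_{a,b}:=\int_0^1(1-x)^{a}x^{b}f(x)g(x)\,dx$. Bernstein polynomials: $B^n_i(x)=\binom ni x^i(1-x)^{n-i}$. The unconstrained dual Bernstein polynomials $D^N_p(x;a,b)$, $0\le p\le N$, are the unique polynomials of degree $\le N$ with $\langle D^N_p,B^N_q\rangle_{a,b}=\delta_{pq}$. For $k+l\le n$, $\Pi_n^{(k,l)}$ is the space of polynomials $P$ of degree $\le n$ with $P^{(i)}(0)=0$ for $0\le i\le k-1$ and $P^{(j)}(1)=0$ for $0\le j\le l-1$; it has basis $B^n_k,\ldots,B^n_{n-l}$. The constrained dual Bernstein polynomials $D^{(n,k,l)}_i(x;\alpha,\beta)\in\Pi_n^{(k,l)}$, $k\le i\le n-l$, are the unique elements of $\Pi_n^{(k,l)}$ with $\langle D^{(n,k,l)}_i,B^n_j\rangle_{\alpha,\beta}=\delta_{ij}$ for $i,j=k,\ldots,n-l$. Notation: $(c)_k:=\prod_{j=0}^{k-1}(c+j)$; $B(\lambda,\mu)$ is the beta function; Hahn polynomials $Q_m(x;a,b,N):={}_3F_2(-m,m+a+b+1,-x;a+1,-N;1)$. *)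

theory Defs
  imports "HOL-Analysis.Analysis" "HOL-Computational_Algebra.Polynomial"
begin

definition wip :: "real \<Rightarrow> real \<Rightarrow> (real \<Rightarrow> real) \<Rightarrow> (real \<Rightarrow> real) \<Rightarrow> real" where
  "wip a b f g = integral {0..1} (\<lambda>x. (1 - x) powr a * x powr b * f x * g x)"

definition bern :: "nat \<Rightarrow> nat \<Rightarrow> real \<Rightarrow> real" where
  "bern n i x = real (n choose i) * x ^ i * (1 - x) ^ (n - i)"

definition udual :: "nat \<Rightarrow> real \<Rightarrow> real \<Rightarrow> nat \<Rightarrow> real poly" where
  "udual N a b p = (THE P. degree P \<le> N \<and>
      (\<forall>q\<in>{0..N}. wip a b (poly P) (bern N q) = (if p = q then 1 else 0)))"

definition ucoef :: "nat \<Rightarrow> real \<Rightarrow> real \<Rightarrow> nat \<Rightarrow> nat \<Rightarrow> real" where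
  "ucoef N a b p = (THE c. (\<forall>q>N. c q = 0) \<and>
      poly (udual N a b p) = (\<lambda>x. \<Sum>q=0..N. c q * bern N q x))"

definition Pi_kl :: "nat \<Rightarrow> nat \<Rightarrow> nat \<Rightarrow> real poly set" where
  "Pi_kl n k l = {P. degree P \<le> n \<and>
      (\<forall>i<k. poly ((pderiv ^^ i) P) 0 = 0) \<and>
      (\<forall>j<l. poly ((pderiv ^^ j) P) 1 = 0)}"

definition cdual :: "nat \<Rightarrow> nat \<Rightarrow> nat \<Rightarrow> real \<Rightarrow> real \<Rightarrow> nat \<Rightarrow> real poly" where
  "cdual n k l \<alpha> \<beta> i = (THE P. P \<in> Pi_kl n k l \<and>
      (\<forall>j\<in>{k..n-l}. wip \<alpha> \<beta> (poly P) (bern n j) = (if i = j then 1 else 0)))"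

definition Ucoef :: "nat \<Rightarrow> nat \<Rightarrow> nat \<Rightarrow> nat \<Rightarrow> real" where
  "Ucoef n k l i = real ((n - k - l) choose (i - k)) / real (n choose i)"

definition Ccoef :: "nat \<Rightarrow> nat \<Rightarrow> nat \<Rightarrow> real \<Rightarrow> real \<Rightarrow> nat \<Rightarrow> nat \<Rightarrow> real" where
  "Ccoef n k l \<alpha> \<beta> i j = Ucoef n k l i * Ucoef n k l j *
      ucoef (n - k - l) (\<alpha> + 2 * real l) (\<beta> + 2 * real k) (i - k) (j - k)"

end

theory Submission
  imports Defs "HOL-Computational_Algebra.Polynomial_Factorial" "HOL-Computational_Algebra.Field_as_Ring"
    "Jordan_Normal_Form.Determinant"
begin

(* Write N = n-k-l and let E(x) = x^k (1-x)^l.  A polynomial of degree \<le> n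
   satisfies the k conditions at 0 and the l conditions at 1 defining Pi_n^(k,l) exactly
   when it is E*R with deg R \<le> N.  Moreover E(x) B^N_{j-k}(x) = U_j B^n_j(x), so
     <E*R, B^n_j>_{alpha,beta} = <R, B^N_{j-k}>_{alpha+2l, beta+2k} / U_j.
   Hence the constrained dual D^(n,k,l)_i is U_i * E * D^N_{i-k}(.; alpha+2l, beta+2k), and
   expanding D^N_{i-k} in the Bernstein basis of degree N and multiplying by E gives the
   claimed Bezier coefficients C_ij = U_i U_j c_{i-k,j-k}. *)


lemma square_system_solvable:
  fixes G :: "nat \<Rightarrow> nat \<Rightarrow> real"
  assumes inj: "\<And>v. (\<forall>q\<le>N. (\<Sum>r\<le>N. G q r * v r) = 0) \<Longrightarrow> (\<forall>r\<le>N. v r = 0)"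
  shows "\<exists>v. \<forall>q\<le>N. (\<Sum>r\<le>N. G q r * v r) = b q"
proof -
  define A :: "real mat" where "A = mat (Suc N) (Suc N) (\<lambda>(i,j). G i j)"
  have A: "A \<in> carrier_mat (Suc N) (Suc N)" unfolding A_def by simp
  have mv: "(A *\<^sub>v w) $ q = (\<Sum>r\<le>N. G q r * w $ r)" if "q \<le> N" "dim_vec w = Suc N" for w q
    using that unfolding A_def by (simp add: scalar_prod_def lessThan_Suc_atMost atLeast0LessThan)
  have "Determinant.det A \<noteq> 0"
  proof
    assume "Determinant.det A = 0"
    then obtain w where w: "w \<in> carrier_vec (Suc N)" "w \<noteq> 0\<^sub>v (Suc N)" "A *\<^sub>v w = 0\<^sub>v (Suc N)"
      using det_0_iff_vec_prod_zero_field[OF A] by blast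
    have "\<forall>q\<le>N. (\<Sum>r\<le>N. G q r * w $ r) = 0"
    proof (intro allI impI)
      fix q assume q: "q \<le> N"
      have "(A *\<^sub>v w) $ q = 0" using w(3) q by simp
      thus "(\<Sum>r\<le>N. G q r * w $ r) = 0" using mv[OF q] w(1) by simp
    qed
    from inj[OF this] have "w = 0\<^sub>v (Suc N)" using w(1) by (intro eq_vecI) auto
    with w(2) show False by simp
  qed
  from det_non_zero_imp_unit[OF A this, of "()"]
  obtain B where AB: "A * B = 1\<^sub>m (Suc N)" and B: "B \<in> carrier_mat (Suc N) (Suc N)"
    unfolding Units_def ring_mat_def by auto
  define bv where "bv = vec (Suc N) b"
  define w where "w = B *\<^sub>v bv"
  have wc: "dim_vec w = Suc N" unfolding w_def using B by simp
  have "A *\<^sub>v w = (A * B) *\<^sub>v bv" unfolding w_def bv_def using A B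
    by (simp add: assoc_mult_mat_vec)
  also have "\<dots> = bv" unfolding AB bv_def by simp
  finally have Aw: "A *\<^sub>v w = bv" .
  show ?thesis
  proof (intro exI allI impI)
    fix q assume q: "q \<le> N"
    have "(A *\<^sub>v w) $ q = b q" using Aw q unfolding bv_def by simp
    thus "(\<Sum>r\<le>N. G q r * (\<lambda>r. w $ r) r) = b q" using mv[OF q wc] by simp
  qed
qed


text \<open>For a, b > -1 the Jacobi weight is integrable on [0,1] (its integral is a Beta value),
  hence so is its product with any continuous function.\<close>

lemma weight_integrable:
  fixes a b :: real and g :: "real \<Rightarrow> real"
  assumes a: "a > -1" and b: "b > -1" and g: "continuous_on {0..1} g"
  shows "(\<lambda>x. (1 - x) powr a * x powr b * g x) integrable_on {0..1}"
proof -
  have "((\<lambda>t. t powr ((b+1) - 1) * (1 - t) powr ((a+1) - 1)) has_integral Beta (b+1) (a+1)) {0..1}"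
    using a b by (intro has_integral_Beta_real) auto
  hence hi: "(\<lambda>t. t powr b * (1 - t) powr a) integrable_on {0..1}" by (auto simp: integrable_on_def)
  have ha: "(\<lambda>t. t powr b * (1 - t) powr a) absolutely_integrable_on {0..1}"
    by (rule nonnegative_absolutely_integrable_1[OF hi]) auto
  have gm: "g \<in> borel_measurable (lebesgue_on {0..1})"
    by (rule continuous_imp_measurable_on_sets_lebesgue[OF g]) auto
  have gb: "bounded (g ` {0..1})"
    by (rule compact_imp_bounded[OF compact_continuous_image[OF g compact_Icc]])
  have "(\<lambda>x. g x * (x powr b * (1 - x) powr a)) absolutely_integrable_on {0..1}"
    by (rule absolutely_integrable_bounded_measurable_product_real[OF gm _ gb ha]) auto
  hence "(\<lambda>x. g x * (x powr b * (1 - x) powr a)) integrable_on {0..1}"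
    using absolutely_integrable_on_def by blast
  thus ?thesis by (simp add: mult_ac)
qed

lemma wip_poly_integrable:
  fixes P Q :: "real poly" and a b :: real
  assumes "a > -1" "b > -1"
  shows "(\<lambda>x. (1 - x) powr a * x powr b * poly P x * poly Q x) integrable_on {0..1}"
proof -
  have "(\<lambda>x. (1 - x) powr a * x powr b * (poly P x * poly Q x)) integrable_on {0..1}"
    by (rule weight_integrable[OF assms]) (intro continuous_intros)
  thus ?thesis by (simp add: mult_ac)
qed

lemma wip_sym: "wip a b f g = wip a b g f"
  unfolding wip_def by (simp add: mult_ac)

lemma wip_add:
  assumes "a > -1" "b > -1"
  shows "wip a b (poly (P + Q)) (poly R) = wip a b (poly P) (poly R) + wip a b (poly Q) (poly R)"
proof -
  have "wip a b (poly (P + Q)) (poly R) = integral {0..1} (\<lambda>x. (1 - x) powr a * x powr b * poly P x * poly R x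
     + (1 - x) powr a * x powr b * poly Q x * poly R x)"
    unfolding wip_def by (simp add: algebra_simps)
  also have "\<dots> = wip a b (poly P) (poly R) + wip a b (poly Q) (poly R)"
    unfolding wip_def by (rule integral_add; rule wip_poly_integrable[OF assms])
  finally show ?thesis .
qed

lemma wip_diff:
  assumes "a > -1" "b > -1"
  shows "wip a b (poly (P - Q)) (poly R) = wip a b (poly P) (poly R) - wip a b (poly Q) (poly R)"
  using wip_add[OF assms, of "P - Q" Q R] by simp

lemma wip_smult: "wip a b (poly (Polynomial.smult c P)) g = c * wip a b (poly P) g"
proof -
  have "wip a b (poly (Polynomial.smult c P)) g = integral {0..1} (\<lambda>x. c * ((1 - x) powr a * x powr b * poly P x * g x))"
    unfolding wip_def by (simp add: mult_ac)
  thus ?thesis unfolding wip_def by simp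
qed

lemma wip_sum:
  assumes "a > -1" "b > -1"
  shows "wip a b (poly (\<Sum>q\<in>A. F q)) (poly R) = (\<Sum>q\<in>A. wip a b (poly (F q)) (poly R))"
proof (induction A rule: infinite_finite_induct)
  case (infinite A) thus ?case by (simp add: wip_def)
next
  case empty thus ?case by (simp add: wip_def)
next
  case (insert x B) thus ?case using wip_add[OF assms, of "F x" "sum F B" R] by (simp del: poly_add)
qed

text \<open>Definiteness: the weight is positive on (0,1), so a polynomial of zero norm vanishes
  on (0,1) and is therefore the zero polynomial.\<close>

lemma wip_definite:
  assumes a: "a > -1" and b: "b > -1" and z: "wip a b (poly P) (poly P) = 0"
  shows "P = 0"
proof -
  define F where "F x = (1 - x) powr a * x powr b * poly P x * poly P x" for x
  have F_nonneg: "F x \<ge> 0" for x unfolding F_def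
    by (metis mult.assoc mult_nonneg_nonneg powr_ge_zero zero_le_square)
  have F_int: "F integrable_on {0..1}" unfolding F_def using wip_poly_integrable[OF a b] .
  have F_zero: "integral {0..1} F = 0" using z unfolding wip_def F_def .
  have root: "poly P x0 = 0" if x0: "0 < x0" "x0 < 1" for x0
  proof -
    define u v where "u = x0 / 2" and "v = (1 + x0) / 2"
    have uv: "0 < u" "u < x0" "x0 < v" "v < 1" using x0 unfolding u_def v_def by auto
    have sub: "{u..v} \<subseteq> {0..1}" using uv by auto
    have F_int_uv: "F integrable_on {u..v}"
      using integrable_on_subinterval[OF F_int, of u v] sub by simp
    have "integral {u..v} F \<le> integral {0..1} F"
      by (rule integral_subset_le[OF sub F_int_uv F_int]) (simp add: F_nonneg)
    moreover have "integral {u..v} F \<ge> 0" by (rule integral_nonneg[OF F_int_uv]) (simp add: F_nonneg)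
    ultimately have "(F has_integral 0) (cbox u v)"
      using F_zero F_int_uv by (simp add: has_integral_integral)
    moreover have "continuous_on (cbox u v) F" unfolding F_def
      using uv by (intro continuous_intros) auto
    ultimately have "F x0 = 0"
      by (intro has_integral_0_cbox_imp_0) (use uv in \<open>auto simp: F_nonneg\<close>)
    moreover have "(1 - x0) powr a > 0" "x0 powr b > 0" using x0 by auto
    ultimately show ?thesis unfolding F_def by simp
  qed
  show ?thesis
  proof (rule ccontr)
    assume "P \<noteq> 0"
    hence "finite {x. poly P x = 0}" by (rule poly_roots_finite)
    moreover have "{0<..<(1::real)} \<subseteq> {x. poly P x = 0}" using root by auto
    ultimately have "finite {0<..<(1::real)}" by (rule finite_subset[rotated])
    thus False using infinite_Ioo[of "0::real" 1] by simp
  qed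
qed


section \<open>The Bernstein basis\<close>

definition bern_poly :: "nat \<Rightarrow> nat \<Rightarrow> real poly" where
  "bern_poly N q = Polynomial.smult (of_nat (N choose q)) ([:0,1:]^q * [:1,-1:]^(N-q))"

lemma poly_bern_poly: "poly (bern_poly N q) = bern N q"
  by (rule ext) (simp add: bern_poly_def bern_def poly_power)

lemma degree_bern_poly: "q \<le> N \<Longrightarrow> degree (bern_poly N q) \<le> N"
proof -
  assume q: "q \<le> N"
  have "degree (bern_poly N q) \<le> degree (([:0,1:]::real poly)^q * [:1,-1:]^(N-q))"
    unfolding bern_poly_def by (rule degree_smult_le)
  also have "\<dots> \<le> degree (([:0,1:]::real poly)^q) + degree (([:1,-1:]::real poly)^(N-q))"
    by (rule degree_mult_le)
  also have "\<dots> \<le> q * 1 + (N - q) * 1"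
    by (intro add_mono order.trans[OF degree_power_le]) auto
  finally show ?thesis using q by simp
qed

text \<open>Degree elevation of a monomial: x^m = x^m (x + (1-x))^(N-m) in Bernstein form.\<close>

lemma monomial_in_bernstein:
  fixes x :: real
  assumes m: "m \<le> N"
  shows "x^m = (\<Sum>q\<le>N. (if m \<le> q then real (N-m choose (q-m)) / real (N choose q) else 0) * bern N q x)"
proof -
  have "x^m = x^m * (x + (1-x))^(N-m)" by simp
  also have "\<dots> = x^m * (\<Sum>j\<le>N-m. real (N-m choose j) * x^j * (1-x)^(N-m-j))"
    by (subst binomial_ring) simp
  also have "\<dots> = (\<Sum>j\<le>N-m. real (N-m choose j) * x^(j+m) * (1-x)^(N-(j+m)))"
    unfolding sum_distrib_left by (intro sum.cong refl) (simp add: power_add mult_ac add.commute[of m])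
  also have "\<dots> = (\<Sum>q\<in>{0+m..(N-m)+m}. real (N-m choose (q-m)) * x^q * (1-x)^(N-q))"
    by (subst sum.shift_bounds_cl_nat_ivl) (simp add: atLeast0AtMost)
  also have "{0+m..(N-m)+m} = {..N} \<inter> {q. m \<le> q}" using m by auto
  also have "(\<Sum>q\<in>{..N} \<inter> {q. m \<le> q}. real (N-m choose (q-m)) * x^q * (1-x)^(N-q))
      = (\<Sum>q\<in>{..N} \<inter> {q. m \<le> q}. real (N-m choose (q-m)) / real (N choose q) * bern N q x)"
    by (rule sum.cong) (auto simp: bern_def)
  also have "\<dots> = (\<Sum>q\<le>N. (if m \<le> q then real (N-m choose (q-m)) / real (N choose q) else 0) * bern N q x)"
    by (subst sum.inter_restrict) (auto intro!: sum.cong)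
  finally show ?thesis .
qed

lemma bernstein_span:
  fixes P :: "real poly"
  assumes "degree P \<le> N"
  shows "\<exists>c. P = (\<Sum>q\<le>N. Polynomial.smult (c q) (bern_poly N q))"
proof -
  define T where "T m q = (if m \<le> q then real (N-m choose (q-m)) / real (N choose q) else 0)" for m q
  define c where "c q = (\<Sum>m\<le>N. coeff P m * T m q)" for q
  have "poly P x = (\<Sum>q\<le>N. c q * bern N q x)" for x
  proof -
    have "poly P x = (\<Sum>m\<le>degree P. coeff P m * x ^ m)" by (rule poly_altdef)
    also have "\<dots> = (\<Sum>m\<le>N. coeff P m * x ^ m)"
      by (rule sum.mono_neutral_left) (use assms in \<open>auto simp: coeff_eq_0\<close>)
    also have "\<dots> = (\<Sum>m\<le>N. \<Sum>q\<le>N. coeff P m * T m q * bern N q x)"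
      unfolding T_def by (intro sum.cong refl)
        (simp add: monomial_in_bernstein sum_distrib_left mult.assoc)
    also have "\<dots> = (\<Sum>q\<le>N. c q * bern N q x)"
      unfolding c_def by (subst sum.swap) (simp add: sum_distrib_right)
    finally show ?thesis .
  qed
  hence "poly P = poly (\<Sum>q\<le>N. Polynomial.smult (c q) (bern_poly N q))"
    by (intro ext) (simp add: poly_sum poly_bern_poly)
  thus ?thesis by (auto simp: poly_eq_poly_eq_iff)
qed

text \<open>Linear independence: in a vanishing combination, the coefficient of least index q0
  would be the coefficient of x^q0 (up to a binomial factor), since B^N_r is divisible by
  x^r.\<close>

lemma bernstein_independent:
  assumes z: "\<And>x. (\<Sum>q\<le>N. c q * bern N q x) = 0" and q: "q \<le> N"
  shows "c q = 0"
proof (rule ccontr)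
  assume nz: "c q \<noteq> 0"
  define q0 where "q0 = (LEAST q. q \<le> N \<and> c q \<noteq> 0)"
  have q0: "q0 \<le> N" "c q0 \<noteq> 0"
    using LeastI[of "\<lambda>q. q \<le> N \<and> c q \<noteq> 0" q] q nz unfolding q0_def by auto
  have below: "c r = 0" if "r < q0" "r \<le> N" for r
    using not_less_Least[of r "\<lambda>q. q \<le> N \<and> c q \<noteq> 0"] that unfolding q0_def by auto
  define S where "S = (\<Sum>q\<le>N. Polynomial.smult (c q) (bern_poly N q))"
  have "poly S = (\<lambda>x. 0)" unfolding S_def by (rule ext) (simp add: poly_sum poly_bern_poly z)
  hence S0: "S = 0" by (metis poly_all_0_iff_0)
  have term_coeff: "coeff (Polynomial.smult (c r) (bern_poly N r)) q0 = (if r = q0 then c q0 * real (N choose q0) else 0)"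
    if "r \<le> N" for r
  proof -
    have "coeff (Polynomial.smult (c r) (bern_poly N r)) q0 =
        c r * real (N choose r) * coeff (monom 1 r * [:1,-1:]^(N-r)) q0"
      by (simp add: bern_poly_def monom_altdef)
    also have "\<dots> = (if r = q0 then c q0 * real (N choose q0) else 0)"
    proof (cases "r < q0")
      case True thus ?thesis using below[OF True that] by simp
    next
      case False
      thus ?thesis by (auto simp: coeff_monom_mult poly_0_coeff_0[symmetric] poly_power)
    qed
    finally show ?thesis .
  qed
  have "coeff S q0 = (\<Sum>r\<le>N. (if r = q0 then c q0 * real (N choose q0) else 0))"
    unfolding S_def coeff_sum by (rule sum.cong[OF refl], rule term_coeff, simp)
  also have "\<dots> = c q0 * real (N choose q0)" using q0 by simp
  finally have "coeff S q0 \<noteq> 0" using q0 by simp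
  with S0 show False by simp
qed


section \<open>The unconstrained dual Bernstein polynomials\<close>

text \<open>A polynomial of degree \<le> N is determined by its inner products with B^N_0..B^N_N:
  the difference is orthogonal to the whole space, in particular to itself.\<close>

lemma wip_bernstein_determines:
  fixes P P' :: "real poly"
  assumes a: "a > -1" and b: "b > -1" and dP: "degree P \<le> N" and dP': "degree P' \<le> N"
    and eq: "\<And>q. q \<le> N \<Longrightarrow> wip a b (poly P) (bern N q) = wip a b (poly P') (bern N q)"
  shows "P = P'"
proof -
  define D where "D = P - P'"
  have orth: "wip a b (poly D) (bern N q) = 0" if "q \<le> N" for q
    using eq[OF that] wip_diff[OF a b, of P P' "bern_poly N q"] unfolding D_def poly_bern_poly by simp
  obtain c where Dc: "D = (\<Sum>q\<le>N. Polynomial.smult (c q) (bern_poly N q))"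
    using bernstein_span degree_diff_le[OF dP dP'] unfolding D_def by blast
  have "wip a b (poly D) (poly D) = (\<Sum>q\<le>N. wip a b (poly (Polynomial.smult (c q) (bern_poly N q))) (poly D))"
    by (subst (1) Dc) (rule wip_sum[OF a b])
  also have "\<dots> = (\<Sum>q\<le>N. c q * wip a b (poly D) (bern N q))"
    by (rule sum.cong[OF refl]) (simp add: wip_smult poly_bern_poly wip_sym[of a b "bern N _"])
  also have "\<dots> = 0" by (simp add: orth)
  finally have "D = 0" by (rule wip_definite[OF a b])
  thus ?thesis unfolding D_def by simp
qed

lemma wip_bernstein_combination:
  assumes a: "a > -1" and b: "b > -1"
  shows "wip a b (poly (\<Sum>r\<le>N. Polynomial.smult (v r) (bern_poly N r))) (bern N q)
       = (\<Sum>r\<le>N. wip a b (bern N r) (bern N q) * v r)"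
proof -
  have "wip a b (poly (\<Sum>r\<le>N. Polynomial.smult (v r) (bern_poly N r))) (poly (bern_poly N q))
       = (\<Sum>r\<le>N. wip a b (poly (bern_poly N r)) (poly (bern_poly N q)) * v r)"
    by (subst wip_sum[OF a b]) (simp add: wip_smult mult.commute)
  thus ?thesis unfolding poly_bern_poly .
qed

text \<open>Existence of the dual polynomial: the Gram system is injective by
  wip_bernstein_determines and bernstein_independent, hence solvable.\<close>

lemma udual_exists:
  assumes a: "a > -1" and b: "b > -1"
  shows "\<exists>P. degree P \<le> N \<and> (\<forall>q\<in>{0..N}. wip a b (poly P) (bern N q) = (if p = q then 1 else 0))"
proof -
  define G where "G q r = wip a b (bern N r) (bern N q)" for q r
  define comb where "comb v = (\<Sum>r\<le>N. Polynomial.smult (v r) (bern_poly N r))" for v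
  have deg_comb: "degree (comb v) \<le> N" for v
    unfolding comb_def by (rule degree_sum_le) (auto intro: order.trans[OF degree_smult_le] degree_bern_poly)
  have gram: "wip a b (poly (comb v)) (bern N q) = (\<Sum>r\<le>N. G q r * v r)" for v q
    unfolding comb_def G_def by (rule wip_bernstein_combination[OF a b])
  have "\<exists>v. \<forall>q\<le>N. (\<Sum>r\<le>N. G q r * v r) = (if p = q then 1 else 0)"
  proof (rule square_system_solvable)
    fix v assume h: "\<forall>q\<le>N. (\<Sum>r\<le>N. G q r * v r) = 0"
    have "comb v = 0"
    proof (rule wip_bernstein_determines[OF a b deg_comb])
      show "degree (0::real poly) \<le> N" by simp
      fix q assume "q \<le> N"
      thus "wip a b (poly (comb v)) (bern N q) = wip a b (poly 0) (bern N q)"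
        using h unfolding gram by (simp add: wip_def)
    qed
    moreover have "poly (comb v) x = (\<Sum>r\<le>N. v r * bern N r x)" for x
      unfolding comb_def by (simp add: poly_sum poly_bern_poly)
    ultimately have "\<And>x. (\<Sum>r\<le>N. v r * bern N r x) = 0" by simp
    thus "\<forall>r\<le>N. v r = 0" using bernstein_independent by blast
  qed
  then obtain v where "\<forall>q\<le>N. (\<Sum>r\<le>N. G q r * v r) = (if p = q then 1 else 0)" ..
  hence "degree (comb v) \<le> N \<and> (\<forall>q\<in>{0..N}. wip a b (poly (comb v)) (bern N q) = (if p = q then 1 else 0))"
    using deg_comb gram by simp
  thus ?thesis ..
qed

lemma udual_spec:
  assumes a: "a > -1" and b: "b > -1"
  shows "degree (udual N a b p) \<le> N \<and>
    (\<forall>q\<in>{0..N}. wip a b (poly (udual N a b p)) (bern N q) = (if p = q then 1 else 0))"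
proof -
  have "\<exists>!P. degree P \<le> N \<and> (\<forall>q\<in>{0..N}. wip a b (poly P) (bern N q) = (if p = q then 1 else 0))"
  proof (rule ex_ex1I)
    show "\<exists>P. degree P \<le> N \<and> (\<forall>q\<in>{0..N}. wip a b (poly P) (bern N q) = (if p = q then 1 else 0))"
      by (rule udual_exists[OF a b])
  next
    fix P P' assume "degree P \<le> N \<and> (\<forall>q\<in>{0..N}. wip a b (poly P) (bern N q) = (if p = q then 1 else 0))"
      "degree P' \<le> N \<and> (\<forall>q\<in>{0..N}. wip a b (poly P') (bern N q) = (if p = q then 1 else 0))"
    thus "P = P'" by (intro wip_bernstein_determines[OF a b, of P N P']) auto
  qed
  thus ?thesis unfolding udual_def by (rule theI')
qed

lemma ucoef_spec:
  assumes a: "a > -1" and b: "b > -1"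
  shows "poly (udual N a b p) = (\<lambda>x. \<Sum>q=0..N. ucoef N a b p q * bern N q x)"
proof -
  define D where "D = udual N a b p"
  have "\<exists>!c. (\<forall>q>N. c q = 0) \<and> poly D = (\<lambda>x. \<Sum>q=0..N. c q * bern N q x)"
  proof (rule ex_ex1I)
    obtain c where "D = (\<Sum>q\<le>N. Polynomial.smult (c q) (bern_poly N q))"
      using bernstein_span udual_spec[OF a b] unfolding D_def by blast
    hence "poly D = (\<lambda>x. \<Sum>q=0..N. (if q \<le> N then c q else 0) * bern N q x)"
      by (intro ext) (simp add: poly_sum poly_bern_poly atLeast0AtMost)
    thus "\<exists>c. (\<forall>q>N. c q = 0) \<and> poly D = (\<lambda>x. \<Sum>q=0..N. c q * bern N q x)"
      by (intro exI[of _ "\<lambda>q. if q \<le> N then c q else 0"]) auto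
  next
    fix c1 c2
    assume h1: "(\<forall>q>N. c1 q = 0) \<and> poly D = (\<lambda>x. \<Sum>q=0..N. c1 q * bern N q x)"
      and h2: "(\<forall>q>N. c2 q = 0) \<and> poly D = (\<lambda>x. \<Sum>q=0..N. c2 q * bern N q x)"
    have "(\<Sum>q\<le>N. (c1 q - c2 q) * bern N q x) = 0" for x
    proof -
      have "(\<Sum>q\<le>N. c1 q * bern N q x) = (\<Sum>q\<le>N. c2 q * bern N q x)"
        using fun_cong[OF conjunct2[OF h1], of x] fun_cong[OF conjunct2[OF h2], of x]
        by (simp add: atLeast0AtMost)
      thus ?thesis by (simp add: left_diff_distrib sum_subtractf)
    qed
    hence "c1 q - c2 q = 0" if "q \<le> N" for q
      using bernstein_independent[of "\<lambda>q. c1 q - c2 q" N] that by blast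
    thus "c1 = c2" using h1 h2 by (metis eq_iff_diff_eq_0 ext not_le)
  qed
  hence "(\<forall>q>N. ucoef N a b p q = 0) \<and> poly D = (\<lambda>x. \<Sum>q=0..N. ucoef N a b p q * bern N q x)"
    unfolding ucoef_def D_def by (rule theI')
  thus ?thesis unfolding D_def by blast
qed


lemma pderiv_iter_linear_mult:
  fixes F q :: "real poly"
  assumes dq: "pderiv q = 1"
  shows "(pderiv ^^ Suc i) (q * F) = Polynomial.smult (of_nat (Suc i)) ((pderiv ^^ i) F) + q * (pderiv ^^ Suc i) F"
proof (induction i)
  case 0 thus ?case by (simp add: pderiv_mult dq)
next
  case (Suc i)
  have "(pderiv ^^ Suc (Suc i)) (q * F) = Polynomial.smult (of_nat (Suc i)) ((pderiv ^^ Suc i) F)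
      + (pderiv ^^ Suc i) F + q * (pderiv ^^ Suc (Suc i)) F"
    using Suc by (simp add: pderiv_add pderiv_smult pderiv_mult dq algebra_simps)
  also have "\<dots> = Polynomial.smult (of_nat (Suc (Suc i))) ((pderiv ^^ Suc i) F) + q * (pderiv ^^ Suc (Suc i)) F"
    by (simp only: of_nat_Suc smult_add_left smult_1_left add_ac)
  finally show ?case .
qed

lemma root_power_dvd_iff_derivs:
  fixes P :: "real poly"
  shows "[:-c,1:]^k dvd P \<longleftrightarrow> (\<forall>i<k. poly ((pderiv ^^ i) P) c = 0)"
proof (induction k arbitrary: P)
  case 0 thus ?case by simp
next
  case (Suc k)
  define q where "q = [:-c,1:]"
  have dq: "pderiv q = 1" and pq: "poly q c = 0" unfolding q_def by (simp_all add: pderiv_pCons)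
  have shift: "poly ((pderiv ^^ Suc i) (q * R)) c = of_nat (Suc i) * poly ((pderiv ^^ i) R) c" for i R
    unfolding pderiv_iter_linear_mult[OF dq] by (simp add: pq)
  have "q^Suc k dvd P \<longleftrightarrow> (\<exists>R. P = q * R \<and> q^k dvd R)"
    by (auto simp: mult.assoc elim!: dvdE)
  also have "\<dots> \<longleftrightarrow> (\<exists>R. P = q * R \<and> (\<forall>i<k. poly ((pderiv ^^ i) R) c = 0))"
    using Suc.IH unfolding q_def by simp
  also have "\<dots> \<longleftrightarrow> (\<forall>i<Suc k. poly ((pderiv ^^ i) P) c = 0)"
  proof
    assume "\<exists>R. P = q * R \<and> (\<forall>i<k. poly ((pderiv ^^ i) R) c = 0)"
    then obtain R where "P = q * R" "\<forall>i<k. poly ((pderiv ^^ i) R) c = 0" by blast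
    thus "\<forall>i<Suc k. poly ((pderiv ^^ i) P) c = 0"
      using pq shift by (auto simp: less_Suc_eq_0_disj)
  next
    assume h: "\<forall>i<Suc k. poly ((pderiv ^^ i) P) c = 0"
    have "poly P c = 0" using h[rule_format, of 0] by simp
    hence "q dvd P" unfolding q_def by (simp add: poly_eq_0_iff_dvd)
    then obtain R where P: "P = q * R" by (auto elim!: dvdE)
    have "poly ((pderiv ^^ i) R) c = 0" if "i < k" for i
      using h[rule_format, of "Suc i"] that unfolding P shift by simp
    with P show "\<exists>R. P = q * R \<and> (\<forall>i<k. poly ((pderiv ^^ i) R) c = 0)" by blast
  qed
  finally show ?case unfolding q_def .
qed


section \<open>The space Pi_n^(k,l) and the edge factor x^k (1-x)^l\<close>

definition edge :: "nat \<Rightarrow> nat \<Rightarrow> real poly" where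
  "edge k l = [:0,1:]^k * [:1,-1:]^l"

lemma poly_edge: "poly (edge k l) x = x^k * (1-x)^l"
  by (simp add: edge_def poly_power)

lemma degree_edge: "degree (edge k l) = k + l"
  unfolding edge_def by (subst degree_mult_eq) (auto simp: degree_power_eq)

lemma edge_nonzero: "edge k l \<noteq> 0"
  using degree_edge[of k l] by (cases "k + l = 0") (auto simp: edge_def)

lemma x_minus_1_power_associated:
  "[:-1,1:]^l dvd ([:1,-1:]^l :: real poly)" "[:1,-1:]^l dvd ([:-1,1:]^l :: real poly)"
  by (rule dvd_power_same, rule dvdI[of _ _ "[:-1:]"], simp)+

lemma Pi_kl_iff_edge_multiple:
  assumes kl: "k + l \<le> n"
  shows "P \<in> Pi_kl n k l \<longleftrightarrow> (\<exists>R. P = edge k l * R \<and> degree R \<le> n - k - l)"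
proof
  assume P: "P \<in> Pi_kl n k l"
  hence "[:-0,1:]^k dvd P" "[:-1,1:]^l dvd P"
    unfolding Pi_kl_def root_power_dvd_iff_derivs by auto
  moreover obtain P1 where P1: "P = [:0,1:]^k * P1"
    using \<open>[:-0,1:]^k dvd P\<close> by (auto elim!: dvdE)
  ultimately have dvd1: "[:-1,1:]^l dvd P" by blast
  have "coprime [:-1,1:] ([:0,1:] :: real poly)"
  proof (rule coprimeI)
    fix c :: "real poly" assume "c dvd [:-1,1:]" "c dvd [:0,1:]"
    hence "c dvd [:0,1:] - [:-1,1:]" by (intro dvd_diff)
    thus "is_unit c" by (simp add: one_pCons)
  qed
  hence "coprime ([:-1,1:]^l) (([:0,1:] :: real poly)^k)"
    by simp
  hence "[:-1,1:]^l dvd P1" using dvd1 unfolding P1 by (simp add: coprime_dvd_mult_right_iff)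
  hence "[:1,-1:]^l dvd P1" using x_minus_1_power_associated(2) dvd_trans by blast
  then obtain R where R: "P1 = [:1,-1:]^l * R" by (auto elim!: dvdE)
  have PR: "P = edge k l * R" unfolding P1 R edge_def by (simp add: mult.assoc)
  have "degree P \<le> n" using P unfolding Pi_kl_def by simp
  hence "degree R \<le> n - k - l"
    using degree_mult_eq[OF edge_nonzero, of R] degree_edge[of k l] unfolding PR
    by (cases "R = 0") auto
  with PR show "\<exists>R. P = edge k l * R \<and> degree R \<le> n - k - l" by blast
next
  assume "\<exists>R. P = edge k l * R \<and> degree R \<le> n - k - l"
  then obtain R where PR: "P = edge k l * R" and dR: "degree R \<le> n - k - l" by blast
  have "degree P \<le> n"
    using degree_mult_le[of "edge k l" R] dR kl unfolding PR degree_edge by linarith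
  moreover have "[:-0,1:]^k dvd P" unfolding PR edge_def by (simp add: mult.assoc)
  moreover have "[:-1,1:]^l dvd P"
    unfolding PR edge_def using x_minus_1_power_associated(1) by (simp add: dvd_mult2 dvd_mult)
  ultimately show "P \<in> Pi_kl n k l"
    unfolding Pi_kl_def root_power_dvd_iff_derivs[symmetric] by simp
qed


lemma Ucoef_pos:
  assumes "k + l \<le> n" "k \<le> j" "j \<le> n - l"
  shows "Ucoef n k l j > 0"
  using assms unfolding Ucoef_def by (simp add: zero_less_binomial_iff)

lemma edge_times_bern:
  fixes x :: real
  assumes "k + l \<le> n" "q \<le> n - k - l"
  shows "x^k * (1-x)^l * bern (n-k-l) q x = Ucoef n k l (q+k) * bern n (q+k) x"
proof -
  have e: "n - (q+k) = (n-k-l-q) + l" using assms by arith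
  have "real (n choose (q+k)) \<noteq> 0" using assms by simp
  thus ?thesis unfolding bern_def Ucoef_def e by (simp add: power_add mult_ac)
qed

lemma powr_times_power:
  fixes y a :: real
  assumes "y \<ge> 0"
  shows "y powr a * y^m = y powr (a + real m)"
  using assms by (cases "y = 0") (auto simp: powr_add powr_realpow power_0_left)

text \<open>Multiplying by E moves x^k (1-x)^l from the first argument into the weight, and the
  Bernstein polynomial B^n_j absorbs another factor x^k (1-x)^l (edge_times_bern).\<close>

lemma wip_edge_transfer:
  fixes R :: "real poly"
  assumes kl: "k + l \<le> n" and j: "k \<le> j" "j \<le> n - l"
  shows "wip \<alpha> \<beta> (poly (edge k l * R)) (bern n j) =
    wip (\<alpha> + 2 * real l) (\<beta> + 2 * real k) (poly R) (bern (n-k-l) (j-k)) / Ucoef n k l j"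
proof -
  define U where "U = Ucoef n k l j"
  have U: "U > 0" unfolding U_def using Ucoef_pos[OF assms] .
  have bj: "bern n j x = x^k * (1-x)^l * bern (n-k-l) (j-k) x / U" for x
    using edge_times_bern[OF kl, of "j-k" x] j kl U unfolding U_def by simp
  have pt: "(1 - x) powr \<alpha> * x powr \<beta> * poly (edge k l * R) x * bern n j x =
      (1 - x) powr (\<alpha> + 2 * real l) * x powr (\<beta> + 2 * real k) * poly R x * bern (n-k-l) (j-k) x / U"
    if x: "x \<in> {0..1}" for x
  proof -
    have A: "(1-x) powr \<alpha> * (1-x)^(l+l) = (1-x) powr (\<alpha> + 2 * real l)"
      using powr_times_power[of "1-x" \<alpha> "l+l"] x by simp
    have B: "x powr \<beta> * x^(k+k) = x powr (\<beta> + 2 * real k)"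
      using powr_times_power[of x \<beta> "k+k"] x by simp
    show ?thesis unfolding bj poly_mult poly_edge A[symmetric] B[symmetric]
      by (simp add: power_add mult_ac)
  qed
  have "wip \<alpha> \<beta> (poly (edge k l * R)) (bern n j) =
      integral {0..1} (\<lambda>x. (1 - x) powr (\<alpha> + 2 * real l) * x powr (\<beta> + 2 * real k) * poly R x
        * bern (n-k-l) (j-k) x / U)"
    unfolding wip_def by (rule integral_cong) (rule pt)
  thus ?thesis unfolding wip_def U_def by simp
qed

lemma wip_constrained_determines:
  assumes kl: "k + l \<le> n" and \<alpha>: "\<alpha> > -1" and \<beta>: "\<beta> > -1"
    and P: "P \<in> Pi_kl n k l" and P': "P' \<in> Pi_kl n k l"
    and eq: "\<And>j. j \<in> {k..n-l} \<Longrightarrow> wip \<alpha> \<beta> (poly P) (bern n j) = wip \<alpha> \<beta> (poly P') (bern n j)"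
  shows "P = P'"
proof -
  obtain R R' where PR: "P = edge k l * R" "degree R \<le> n - k - l"
    and PR': "P' = edge k l * R'" "degree R' \<le> n - k - l"
    using P P' unfolding Pi_kl_iff_edge_multiple[OF kl] by blast
  have "R = R'"
  proof (rule wip_bernstein_determines[OF _ _ PR(2) PR'(2)])
    show "\<alpha> + 2 * real l > -1" "\<beta> + 2 * real k > -1" using \<alpha> \<beta> by auto
    fix q assume q: "q \<le> n - k - l"
    hence j: "k \<le> q + k" "q + k \<le> n - l" using kl by arith+
    show "wip (\<alpha> + 2 * real l) (\<beta> + 2 * real k) (poly R) (bern (n-k-l) q) =
        wip (\<alpha> + 2 * real l) (\<beta> + 2 * real k) (poly R') (bern (n-k-l) q)"
      using eq[of "q+k"] j Ucoef_pos[OF kl j]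
      unfolding PR(1) PR'(1) wip_edge_transfer[OF kl j] by simp
  qed
  thus ?thesis using PR PR' by simp
qed


section \<open>The constrained dual Bernstein polynomials\<close>

lemma cdual_via_udual:
  assumes kl: "k + l \<le> n" and \<alpha>: "\<alpha> > -1" and \<beta>: "\<beta> > -1" and i: "k \<le> i" "i \<le> n - l"
  shows "cdual n k l \<alpha> \<beta> i =
    Polynomial.smult (Ucoef n k l i) (edge k l * udual (n-k-l) (\<alpha> + 2 * real l) (\<beta> + 2 * real k) (i-k))"
    (is "_ = ?Q")
proof -
  define D where "D = udual (n-k-l) (\<alpha> + 2 * real l) (\<beta> + 2 * real k) (i-k)"
  have D: "degree D \<le> n-k-l"
    "\<And>q. q \<le> n-k-l \<Longrightarrow> wip (\<alpha> + 2 * real l) (\<beta> + 2 * real k) (poly D) (bern (n-k-l) q) =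
       (if i - k = q then 1 else 0)"
    using udual_spec[of "\<alpha> + 2 * real l" "\<beta> + 2 * real k"] \<alpha> \<beta> unfolding D_def by auto
  have "?Q \<in> Pi_kl n k l"
    unfolding Pi_kl_iff_edge_multiple[OF kl] D_def[symmetric] mult_smult_right[symmetric]
    using D(1) degree_smult_le order.trans by blast
  moreover have "wip \<alpha> \<beta> (poly ?Q) (bern n j) = (if i = j then 1 else 0)" if j: "j \<in> {k..n-l}" for j
  proof -
    have j': "k \<le> j" "j \<le> n - l" using j by auto
    have jk: "j - k \<le> n-k-l" "(i - k = j - k) = (i = j)" using j i kl by auto
    show ?thesis using Ucoef_pos[OF kl j']
      unfolding D_def[symmetric] wip_smult wip_edge_transfer[OF kl j']
        D(2)[OF jk(1)] jk(2) by auto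
  qed
  ultimately show ?thesis
    unfolding cdual_def using wip_constrained_determines[OF kl \<alpha> \<beta>]
    by (intro the_equality) auto
qed

lemma edge_times_bernstein_expansion:
  assumes kl: "k + l \<le> n"
    and R: "poly R = (\<lambda>x. \<Sum>q=0..n-k-l. c q * bern (n-k-l) q x)"
  shows "poly (edge k l * R) = (\<lambda>x. \<Sum>j=k..n-l. c (j-k) * Ucoef n k l j * bern n j x)"
proof
  fix x :: real
  have "poly (edge k l * R) x = (\<Sum>q=0..n-k-l. c q * (x^k * (1-x)^l * bern (n-k-l) q x))"
    unfolding poly_mult poly_edge R sum_distrib_left by (simp add: mult_ac)
  also have "\<dots> = (\<Sum>q=0..n-k-l. c q * Ucoef n k l (q+k) * bern n (q+k) x)"
    using edge_times_bern[OF kl] by (intro sum.cong) auto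
  also have "\<dots> = (\<Sum>j=0+k..n-k-l+k. c (j-k) * Ucoef n k l j * bern n j x)"
    by (subst sum.shift_bounds_cl_nat_ivl) simp
  also have "n-k-l+k = n-l" using kl by simp
  finally show "poly (edge k l * R) x = (\<Sum>j=k..n-l. c (j-k) * Ucoef n k l j * bern n j x)" by simp
qed


theorem theorem3p2:
  fixes n k l i :: nat and \<alpha> \<beta> :: real
  assumes "k + l \<le> n" and "\<alpha> > -1" and "\<beta> > -1"
    and "k \<le> i" and "i \<le> n - l"
  shows "poly (cdual n k l \<alpha> \<beta> i) =
    (\<lambda>x. \<Sum>j=k..n-l. Ccoef n k l \<alpha> \<beta> i j * bern n j x)"
proof -
  let ?a = "\<alpha> + 2 * real l" and ?b = "\<beta> + 2 * real k"
  have "poly (udual (n-k-l) ?a ?b (i-k)) =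
      (\<lambda>x. \<Sum>q=0..n-k-l. ucoef (n-k-l) ?a ?b (i-k) q * bern (n-k-l) q x)"
    using assms by (intro ucoef_spec) auto
  hence "poly (edge k l * udual (n-k-l) ?a ?b (i-k)) =
      (\<lambda>x. \<Sum>j=k..n-l. ucoef (n-k-l) ?a ?b (i-k) (j-k) * Ucoef n k l j * bern n j x)"
    by (rule edge_times_bernstein_expansion[OF assms(1)])
  thus ?thesis
    unfolding cdual_via_udual[OF assms] poly_smult Ccoef_def
    by (simp add: sum_distrib_left mult_ac)
qed

end
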